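(* Let $\alpha_1,\alpha_2>0$ satisfy $\alpha_1-\alpha_2\ge \sqrt{2}\,e$. Let $p$ be analytic in $\mathbb{D}$ with $p(0)=1$. If $$1+\alpha_1 zp'(z)+\alpha_2 z^2p''(z)\prec z+\sqrt{1+z^2},$$ then $p(z)\prec e^z$.
   Context: $\mathbb{D}$ is the open unit disk. For $g,h$ analytic in $\mathbb{D}$, $g\prec h$ means there is an analytic $w:\mathbb{D}\to\mathbb{D}$ with $w(0)=0$ and $g=h\circ w$. $\sqrt{1+z^2}$ is the branch analytic in $\mathbb{D}$ with value $1$ at $0$. *)

theory Defs
  imports "HOL-Complex_Analysis.Complex_Analysis"
begin

definition subordinate :: "(complex \<Rightarrow> complex) \<Rightarrow> (complex \<Rightarrow> complex) \<Rightarrow> bool" where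
  "subordinate g h \<longleftrightarrow>
     (\<exists>w. w holomorphic_on ball 0 1 \<and> w ` ball 0 1 \<subseteq> ball 0 1 \<and> w 0 = 0 \<and>
          (\<forall>z\<in>ball 0 1. g z = h (w z)))"

end

theory Submission
  imports Defs
begin

text \<open>Write \<open>w\<close> for the Schwarz function of the hypothesis. Since
\<open>|w z| \<le> |z|\<close> and \<open>|csqrt (1 + u\<^sup>2) - 1| \<le> |u|\<^sup>2\<close>, the operator
\<open>G = \<alpha>\<^sub>1 z p' + \<alpha>\<^sub>2 z\<^sup>2 p''\<close> satisfies \<open>|G z| \<le> 2|z|\<close>. With \<open>r = z p'\<close> and
\<open>\<beta> = (\<alpha>\<^sub>1 - \<alpha>\<^sub>2)/\<alpha>\<^sub>2\<close> one has \<open>z r' + \<beta> r = G/\<alpha>\<^sub>2\<close>, and integrating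
\<open>d/dt (t\<^sup>\<beta> r(t z))\<close> along the radius gives \<open>|r z| \<le> 2|z|/\<alpha>\<^sub>1\<close>; one more radial
integration gives \<open>|p z - 1| \<le> 2|z|/\<alpha>\<^sub>1 < 1 - 1/e\<close>. Finally
\<open>|Ln (1 + \<epsilon>)| \<le> -ln (1 - |\<epsilon>|) < 1\<close>, so \<open>Ln \<circ> p\<close> is the Schwarz function
exhibiting \<open>p \<prec> exp\<close>.\<close>

lemma of_real_mult_mem_unit_ball:
  assumes "z \<in> ball 0 1" "0 \<le> t" "t \<le> 1"
  shows "of_real t * z \<in> ball (0::complex) 1"
  using assms by (auto simp: norm_mult intro: le_less_trans[OF mult_left_le_one_le])

lemma continuous_on_radial:
  assumes "f holomorphic_on ball 0 1" "z \<in> ball 0 1"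
  shows "continuous_on {0..1} (\<lambda>t. f (of_real t * z))"
proof -
  have "continuous_on (ball 0 1) f"
    using assms(1) holomorphic_on_imp_continuous_on by blast
  moreover have "continuous_on {0..1} (\<lambda>t::real. of_real t * z)"
    by (intro continuous_intros)
  ultimately show ?thesis
    using of_real_mult_mem_unit_ball[OF assms(2)] by (auto intro: continuous_on_compose2)
qed

lemma has_vector_derivative_radial:
  assumes "f holomorphic_on ball 0 1" "z \<in> ball 0 1" "0 \<le> t" "t \<le> 1"
  shows "((\<lambda>t. f (of_real t * z)) has_vector_derivative z * deriv f (of_real t * z)) (at t)"
proof -
  have "(f has_field_derivative deriv f (of_real t * z)) (at (of_real t * z))"
    using holomorphic_derivI[OF assms(1) open_ball of_real_mult_mem_unit_ball[OF assms(2-4)]] .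
  then have "((\<lambda>c. f (c * z)) has_field_derivative deriv f (of_real t * z) * z) (at (of_real t))"
    by (auto intro!: derivative_eq_intros DERIV_chain2[where f=f])
  then show ?thesis
    using has_vector_derivative_real_field by (fastforce simp: mult.commute)
qed

lemma norm_sub_le_radial_comparison:
  fixes f :: "complex \<Rightarrow> complex" and \<phi> \<phi>' :: "real \<Rightarrow> real"
  assumes "f holomorphic_on ball 0 1" "z \<in> ball 0 1" "continuous_on {0..1} \<phi>"
    and "\<And>t. 0 < t \<Longrightarrow> t < 1 \<Longrightarrow> (\<phi> has_real_derivative \<phi>' t) (at t)"
    and "\<And>t. 0 < t \<Longrightarrow> t < 1 \<Longrightarrow> norm (z * deriv f (of_real t * z)) \<le> \<phi>' t"
  shows "norm (f z - f 0) \<le> \<phi> 1 - \<phi> 0"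
  using differentiable_bound_general[of 0 1 "\<lambda>t. f (of_real t * z)" \<phi>
      "\<lambda>t. z * deriv f (of_real t * z)" \<phi>']
    assms continuous_on_radial has_vector_derivative_radial
  by (simp add: has_real_derivative_iff_has_vector_derivative)

lemma norm_le_if_norm_mult_deriv_add_le:
  fixes r :: "complex \<Rightarrow> complex" and \<beta> M :: real
  assumes \<beta>: "\<beta> > 0" and hol: "r holomorphic_on ball 0 1"
    and bnd: "\<And>\<zeta>. \<zeta> \<in> ball 0 1 \<Longrightarrow> norm (\<zeta> * deriv r \<zeta> + of_real \<beta> * r \<zeta>) \<le> M * norm \<zeta>"
    and z: "z \<in> ball 0 1"
  shows "norm (r z) \<le> M * norm z / (\<beta> + 1)"
proof -
  define f where "f t = of_real (t powr \<beta>) * r (of_real t * z)" for t :: real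
  define f' where "f' t = of_real (t powr (\<beta> - 1)) *
      ((of_real t * z) * deriv r (of_real t * z) + of_real \<beta> * r (of_real t * z))" for t :: real
  define \<phi> where "\<phi> t = M * norm z * t powr (\<beta> + 1) / (\<beta> + 1)" for t :: real
  define \<phi>' where "\<phi>' t = M * norm z * t powr \<beta>" for t :: real
  have "norm (f 1 - f 0) \<le> \<phi> 1 - \<phi> 0"
  proof (rule differentiable_bound_general[of 0 1 f \<phi> f' \<phi>'])
    have "continuous_on {0..1} (\<lambda>t::real. t powr \<beta>)"
      using \<beta> by (intro continuous_on_powr' continuous_intros) auto
    then show "continuous_on {0..1} f"
      unfolding f_def by (intro continuous_on_mult continuous_on_of_real continuous_on_radial hol z)
    show "continuous_on {0..1} \<phi>"
      unfolding \<phi>_def using \<beta> by (intro continuous_on_powr' continuous_intros) auto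
  next
    fix t :: real assume t: "0 < t" "t < 1"
    have pw: "t powr \<beta> = t powr (\<beta> - 1) * t"
      using t by (simp add: powr_diff)
    have "((\<lambda>t. t powr \<beta>) has_real_derivative \<beta> * t powr (\<beta> - 1)) (at t)"
      using t(1) by (rule has_real_derivative_powr)
    then show "(f has_vector_derivative f' t) (at t)"
      unfolding f_def f'_def
      using has_vector_derivative_radial[OF hol z, of t] t
      by (auto intro!: derivative_eq_intros simp: pw algebra_simps)
    have "((\<lambda>t. t powr (\<beta> + 1)) has_real_derivative (\<beta> + 1) * t powr \<beta>) (at t)"
      using has_real_derivative_powr[OF t(1), of "\<beta> + 1"] by simp
    then show "(\<phi> has_vector_derivative \<phi>' t) (at t)"
      unfolding \<phi>_def \<phi>'_def has_real_derivative_iff_has_vector_derivative[symmetric]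
      using \<beta> t by (auto intro!: derivative_eq_intros)
    have "norm (f' t) = t powr (\<beta> - 1) *
        norm ((of_real t * z) * deriv r (of_real t * z) + of_real \<beta> * r (of_real t * z))"
      unfolding f'_def by (simp add: norm_mult)
    also have "\<dots> \<le> t powr (\<beta> - 1) * (M * norm (of_real t * z))"
      using t by (intro mult_left_mono bnd of_real_mult_mem_unit_ball z) auto
    also have "\<dots> = \<phi>' t"
      unfolding \<phi>'_def pw using t by (simp add: norm_mult)
    finally show "norm (f' t) \<le> \<phi>' t" .
  qed simp
  then show ?thesis
    unfolding f_def \<phi>_def using \<beta> by simp
qed

lemma norm_sub_at_0_le_if_norm_mult_deriv_le:
  fixes q :: "complex \<Rightarrow> complex" and K :: real
  assumes hol: "q holomorphic_on ball 0 1"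
    and bnd: "\<And>\<zeta>. \<zeta> \<in> ball 0 1 \<Longrightarrow> norm (\<zeta> * deriv q \<zeta>) \<le> K * norm \<zeta>"
    and z: "z \<in> ball 0 1"
  shows "norm (q z - q 0) \<le> K * norm z"
proof -
  have "norm (q z - q 0) \<le> K * norm z * 1 - K * norm z * 0"
  proof (rule norm_sub_le_radial_comparison[OF hol z])
    show "continuous_on {0..1} (\<lambda>t. K * norm z * t)"
      by (intro continuous_intros)
    fix t :: real assume t: "0 < t" "t < 1"
    show "((\<lambda>t. K * norm z * t) has_real_derivative K * norm z) (at t)"
      by (auto intro!: derivative_eq_intros)
    have "t * norm (z * deriv q (of_real t * z)) = norm ((of_real t * z) * deriv q (of_real t * z))"
      using t by (simp add: norm_mult)
    also have "\<dots> \<le> K * norm (of_real t * z)"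
      using t by (intro bnd of_real_mult_mem_unit_ball z) auto
    also have "\<dots> = t * (K * norm z)"
      using t by (simp add: norm_mult)
    finally show "norm (z * deriv q (of_real t * z)) \<le> K * norm z"
      using t by simp
  qed
  then show ?thesis by simp
qed

lemma norm_sub_le_if_norm_second_order_differential_le:
  fixes \<alpha>1 \<alpha>2 M :: real and p :: "complex \<Rightarrow> complex"
  assumes \<alpha>2: "0 < \<alpha>2" and \<alpha>12: "\<alpha>2 < \<alpha>1" and hol: "p holomorphic_on ball 0 1"
    and bnd: "\<And>\<zeta>. \<zeta> \<in> ball 0 1 \<Longrightarrow>
      norm (of_real \<alpha>1 * \<zeta> * deriv p \<zeta> + of_real \<alpha>2 * \<zeta>\<^sup>2 * deriv (deriv p) \<zeta>) \<le> M * norm \<zeta>"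
    and z: "z \<in> ball 0 1"
  shows "norm (p z - p 0) \<le> M / \<alpha>1 * norm z"
proof -
  define \<beta> where "\<beta> = (\<alpha>1 - \<alpha>2) / \<alpha>2"
  have \<beta>: "\<beta> > 0" and \<beta>1: "\<beta> + 1 = \<alpha>1 / \<alpha>2"
    using \<alpha>2 \<alpha>12 by (simp_all add: \<beta>_def field_simps)
  define r where "r \<zeta> = \<zeta> * deriv p \<zeta>" for \<zeta>
  have hol': "deriv p holomorphic_on ball 0 1"
    using holomorphic_deriv[OF hol] by simp
  have "r holomorphic_on ball 0 1"
    unfolding r_def by (intro holomorphic_intros hol')
  moreover have "norm (\<zeta> * deriv r \<zeta> + of_real \<beta> * r \<zeta>) \<le> M / \<alpha>2 * norm \<zeta>"
    if \<zeta>: "\<zeta> \<in> ball 0 1" for \<zeta>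
  proof -
    have "(deriv p has_field_derivative deriv (deriv p) \<zeta>) (at \<zeta>)"
      using hol' \<zeta> by (auto intro: holomorphic_derivI)
    then have "deriv r \<zeta> = deriv p \<zeta> + \<zeta> * deriv (deriv p) \<zeta>"
      unfolding r_def by (intro DERIV_imp_deriv) (auto intro!: derivative_eq_intros)
    then have "\<zeta> * deriv r \<zeta> + of_real \<beta> * r \<zeta> =
        (of_real \<alpha>1 * \<zeta> * deriv p \<zeta> + of_real \<alpha>2 * \<zeta>\<^sup>2 * deriv (deriv p) \<zeta>) / of_real \<alpha>2"
      unfolding r_def \<beta>_def using \<alpha>2 by (simp add: field_simps power2_eq_square)
    then show ?thesis
      using bnd[OF \<zeta>] \<alpha>2 by (simp add: norm_divide divide_right_mono)
  qed
  ultimately have "norm (r \<zeta>) \<le> M / \<alpha>1 * norm \<zeta>" if "\<zeta> \<in> ball 0 1" for \<zeta>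
    using norm_le_if_norm_mult_deriv_add_le[OF \<beta>, of r "M / \<alpha>2" \<zeta>] that \<alpha>2 \<alpha>12
    by (simp add: \<beta>1)
  then show ?thesis
    using norm_sub_at_0_le_if_norm_mult_deriv_le[OF hol _ z] unfolding r_def by blast
qed

lemma norm_csqrt_one_plus_square_sub_one_le: "norm (csqrt (1 + u\<^sup>2) - 1) \<le> norm u ^ 2"
proof -
  define s where "s = csqrt (1 + u\<^sup>2)"
  have "(s - 1) * (s + 1) = u\<^sup>2"
    unfolding s_def by (simp add: algebra_simps power2_eq_square[symmetric])
  then have eq: "norm (s - 1) * norm (s + 1) = norm u ^ 2"
    by (metis norm_mult norm_power)
  have "1 \<le> Re (s + 1)"
    using Re_csqrt[of "1 + u\<^sup>2"] unfolding s_def by simp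
  also have "\<dots> \<le> norm (s + 1)"
    by (rule complex_Re_le_cmod)
  finally have "norm (s - 1) \<le> norm (s - 1) * norm (s + 1)"
    by (metis mult.right_neutral mult_left_mono norm_ge_zero)
  then show ?thesis
    using eq unfolding s_def by simp
qed

lemma norm_add_csqrt_one_plus_square_sub_one_le:
  assumes "norm u \<le> 1"
  shows "norm (u + csqrt (1 + u\<^sup>2) - 1) \<le> 2 * norm u"
proof -
  have "norm (u + csqrt (1 + u\<^sup>2) - 1) \<le> norm u + norm u ^ 2"
    using norm_triangle_le[OF add_left_mono[OF norm_csqrt_one_plus_square_sub_one_le]]
    by (simp add: add_diff_eq[symmetric])
  also have "\<dots> \<le> norm u + norm u"
    using assms by (simp add: power2_eq_square mult_left_le_one_le)
  finally show ?thesis by simp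
qed

lemma norm_sub_one_le_if_subordinate_add_csqrt:
  assumes "subordinate g (\<lambda>z. z + csqrt (1 + z\<^sup>2))" and z: "z \<in> ball 0 1"
  shows "norm (g z - 1) \<le> 2 * norm z"
proof -
  obtain w where w: "w holomorphic_on ball 0 1" "w ` ball 0 1 \<subseteq> ball 0 1" "w 0 = 0"
    and g: "\<And>z. z \<in> ball 0 1 \<Longrightarrow> g z = w z + csqrt (1 + (w z)\<^sup>2)"
    using assms(1) unfolding subordinate_def by blast
  have wz: "norm (w z) \<le> norm z"
    using Schwarz_Lemma(1)[OF w(1,3)] w(2) z by force
  have "norm (g z - 1) \<le> 2 * norm (w z)"
    unfolding g[OF z] using wz z by (intro norm_add_csqrt_one_plus_square_sub_one_le) simp
  then show ?thesis
    using wz by simp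
qed

lemma norm_Ln_one_plus_le:
  fixes \<epsilon> :: complex
  assumes \<epsilon>: "norm \<epsilon> < 1"
  shows "norm (Ln (1 + \<epsilon>)) \<le> - ln (1 - norm \<epsilon>)"
proof -
  have not_nonpos: "1 + u \<notin> \<real>\<^sub>\<le>\<^sub>0" if "u \<in> ball 0 1" for u :: complex
    using that abs_Re_le_cmod[of u] by (auto simp: complex_nonpos_Reals_iff)
  have hol: "(\<lambda>u. Ln (1 + u)) holomorphic_on ball 0 1"
    using not_nonpos by (intro holomorphic_intros) auto
  have deriv: "deriv (\<lambda>u. Ln (1 + u)) u = inverse (1 + u)" if "u \<in> ball 0 1" for u
    using not_nonpos[OF that] by (intro DERIV_imp_deriv) (auto intro!: derivative_eq_intros)
  have pos: "1 - t * norm \<epsilon> > 0" if "0 \<le> t" "t \<le> 1" for t :: real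
    using that \<epsilon> by (metis diff_gt_0_iff_gt le_less_trans mult_left_le_one_le norm_ge_zero)
  have "norm (Ln (1 + \<epsilon>) - Ln (1 + 0)) \<le> - ln (1 - 1 * norm \<epsilon>) - - ln (1 - 0 * norm \<epsilon>)"
  proof (rule norm_sub_le_radial_comparison[OF hol])
    show "\<epsilon> \<in> ball 0 1" using \<epsilon> by simp
    show "continuous_on {0..1} (\<lambda>t. - ln (1 - t * norm \<epsilon>))"
      using pos by (intro continuous_intros) force+
    fix t :: real assume t: "0 < t" "t < 1"
    show "((\<lambda>t. - ln (1 - t * norm \<epsilon>)) has_real_derivative norm \<epsilon> / (1 - t * norm \<epsilon>)) (at t)"
      using pos[of t] t by (auto intro!: derivative_eq_intros simp: field_simps)
    have "1 - t * norm \<epsilon> \<le> norm (1 + of_real t * \<epsilon>)"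
      using norm_diff_ineq[of 1 "of_real t * \<epsilon>"] t by (simp add: norm_mult)
    moreover have "of_real t * \<epsilon> \<in> ball 0 1"
      using \<epsilon> t by (intro of_real_mult_mem_unit_ball) auto
    ultimately show "norm (\<epsilon> * deriv (\<lambda>u. Ln (1 + u)) (of_real t * \<epsilon>)) \<le> norm \<epsilon> / (1 - t * norm \<epsilon>)"
      using pos[of t] t
      by (simp add: deriv norm_divide divide_inverse[symmetric])
         (rule divide_left_mono; auto intro!: mult_pos_pos)
  qed
  then show ?thesis by simp
qed

lemma subordinate_exp_if_norm_sub_one_less:
  fixes p :: "complex \<Rightarrow> complex"
  assumes hol: "p holomorphic_on ball 0 1" and p0: "p 0 = 1"
    and bnd: "\<And>z. z \<in> ball 0 1 \<Longrightarrow> norm (p z - 1) < 1 - exp (- 1)"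
  shows "subordinate p exp"
  unfolding subordinate_def
proof (intro exI conjI ballI)
  have small: "norm (p z - 1) < 1" if "z \<in> ball 0 1" for z
    using bnd[OF that] by (smt (verit) exp_gt_zero)
  have "p z \<notin> \<real>\<^sub>\<le>\<^sub>0" if "z \<in> ball 0 1" for z
    using small[OF that] abs_Re_le_cmod[of "p z - 1"] by (auto simp: complex_nonpos_Reals_iff)
  then show "(\<lambda>z. Ln (p z)) holomorphic_on ball 0 1"
    using hol by (intro holomorphic_intros)
  show "(\<lambda>z. Ln (p z)) ` ball 0 1 \<subseteq> ball 0 1"
  proof clarify
    fix z :: complex assume z: "z \<in> ball 0 1"
    have "norm (Ln (p z)) \<le> - ln (1 - norm (p z - 1))"
      using norm_Ln_one_plus_le[OF small[OF z]] by simp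
    also have "\<dots> < - ln (exp (- 1))"
    proof -
      have "exp (- 1) < 1 - norm (p z - 1)"
        using bnd[OF z] by simp
      then have "ln (exp (- 1)) < ln (1 - norm (p z - 1))"
        using small[OF z] by (subst ln_less_cancel_iff) auto
      then show ?thesis by simp
    qed
    finally show "Ln (p z) \<in> ball 0 1" by simp
  qed
  show "Ln (p 0) = 0"
    using p0 by simp
  fix z :: complex assume "z \<in> ball 0 1"
  then have "p z \<noteq> 0"
    using small by force
  then show "p z = exp (Ln (p z))" by simp
qed

lemma exp_1_gt_2_44: "exp 1 > (2.44::real)"
proof -
  have "(1 + 1/4) powr 4 < exp (1::real)"
    by (rule exp_1_gt_powr) simp
  moreover have "(1 + 1/4) powr 4 = (5/4::real) ^ 4"
    using powr_numeral[of "5/4::real" "num.Bit0 (num.Bit0 num.One)"] by simp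
  ultimately show ?thesis
    by (simp add: eval_nat_numeral)
qed

lemma two_div_less_one_sub_exp_minus_one:
  fixes \<alpha> :: real
  assumes "sqrt 2 * exp 1 < \<alpha>"
  shows "2 / \<alpha> < 1 - exp (- 1)"
proof -
  have "sqrt 2 > (1.41::real)"
    by (rule real_less_rsqrt) (simp add: power2_eq_square)
  with exp_1_gt_2_44 have "sqrt 2 * (exp 1 - 1) > 1.41 * 1.44"
    by (intro mult_strict_mono) auto
  then have "2 * exp 1 < sqrt 2 * (exp 1 - 1) * exp 1"
    by (intro mult_strict_right_mono) auto
  also have "\<dots> = sqrt 2 * exp 1 * (exp 1 - 1)"
    by (simp add: algebra_simps)
  also have "\<dots> < \<alpha> * (exp 1 - 1)"
    using assms exp_1_gt_2_44 by simp
  moreover have "0 < \<alpha>"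
    using assms by (smt (verit) exp_gt_zero real_sqrt_gt_zero mult_pos_pos)
  ultimately show ?thesis
    by (simp add: field_simps exp_minus)
qed

theorem theorem4p6:
  fixes \<alpha>1 \<alpha>2 :: real and p :: "complex \<Rightarrow> complex"
  assumes "\<alpha>1 > 0" and "\<alpha>2 > 0"
    and "\<alpha>1 - \<alpha>2 \<ge> sqrt 2 * exp 1"
    and "p holomorphic_on ball 0 1"
    and "p 0 = 1"
    and "subordinate
           (\<lambda>z. 1 + of_real \<alpha>1 * z * deriv p z + of_real \<alpha>2 * z^2 * deriv (deriv p) z)
           (\<lambda>z. z + csqrt (1 + z^2))"
  shows "subordinate p exp"
proof -
  have G: "norm (of_real \<alpha>1 * z * deriv p z + of_real \<alpha>2 * z^2 * deriv (deriv p) z) \<le> 2 * norm z"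
    if "z \<in> ball 0 1" for z
    using norm_sub_one_le_if_subordinate_add_csqrt[OF assms(6) that] by simp
  have "0 < sqrt 2 * exp 1"
    by simp
  then have \<alpha>12: "\<alpha>2 < \<alpha>1" and \<alpha>1_big: "sqrt 2 * exp 1 < \<alpha>1"
    using assms(2,3) by linarith+
  have "norm (p z - 1) < 1 - exp (- 1)" if z: "z \<in> ball 0 1" for z
  proof -
    have "norm (p z - 1) \<le> 2 / \<alpha>1 * norm z"
      using norm_sub_le_if_norm_second_order_differential_le[OF assms(2) \<alpha>12 assms(4) G z] assms(5)
      by simp
    also have "\<dots> \<le> 2 / \<alpha>1"
      using z assms(1) by (intro mult_left_le) auto
    also have "\<dots> < 1 - exp (- 1)"
      using \<alpha>1_big by (rule two_div_less_one_sub_exp_minus_one)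
    finally show ?thesis .
  qed
  then show ?thesis
    using subordinate_exp_if_norm_sub_one_less[OF assms(4,5)] by blast
qed

end
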